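(* Fix $R\in[1,\infty]$, $\theta\in\mathbb R$ and $\lambda>0$. Then $F^c_R\big[e^{i\theta}\lambda^{1/2}W(\lambda\,\cdot)\big]=0$.
   Context: $W(x)=(1+\tfrac{|x|^2}{3})^{-1/2}$ on $\mathbb R^3$ is the ground state, solving $-\Delta W=W^5$. Let $\phi$ be a fixed smooth radial function on $\mathbb R^3$ with $\phi(x)=|x|^2$ for $|x|\le1$, $\phi(x)=0$ for $|x|\ge2$, and $|\partial^\alpha\phi(x)|\lesssim|x|^{2-|\alpha|}$ for all multi-indices $\alpha$; for $R\ge1$ set $w_R(x)=R^2\phi(x/R)$. For $R\in[1,\infty)$ and $u\in\dot H^1(\mathbb R^3)$ define \[ F^c_R[u]=\int_{\mathbb R^3}\Big\{(-\Delta\Delta w_R)|u|^2+4\,\mathrm{Re}\,\overline{\partial_j u}\,\partial_k u\,\partial_{jk}w_R-\tfrac43\Delta w_R\,|u|^6\Big\}dx \] (summation over $j,k$), and for $R=\infty$ set $F^c_\infty[u]=8\big(\|\nabla u\|_{L^2}^2-\|u\|_{L^6}^6\big)$. *)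

theory Defs
  imports "HOL-Analysis.Analysis" "HOL-Library.Extended_Real"
begin

type_synonym R3 = "real^3"

definition pd :: "3 \<Rightarrow> (R3 \<Rightarrow> 'b::real_normed_vector) \<Rightarrow> R3 \<Rightarrow> 'b" where
  "pd j f x = vector_derivative (\<lambda>t. f (x + t *\<^sub>R axis j 1)) (at 0)"

fun pdl :: "3 list \<Rightarrow> (R3 \<Rightarrow> 'b::real_normed_vector) \<Rightarrow> R3 \<Rightarrow> 'b" where
  "pdl [] f = f"
| "pdl (j # js) f = pd j (pdl js f)"

definition smooth :: "(R3 \<Rightarrow> real) \<Rightarrow> bool" where
  "smooth f \<longleftrightarrow> (\<forall>js. continuous_on UNIV (pdl js f) \<and>
     (\<forall>j x. (\<lambda>t. pdl js f (x + t *\<^sub>R axis j 1)) differentiable (at 0)))"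

definition laplacian :: "(R3 \<Rightarrow> real) \<Rightarrow> R3 \<Rightarrow> real" where
  "laplacian f x = (\<Sum>j\<in>UNIV. pd j (pd j f) x)"

definition admissible_phi :: "(R3 \<Rightarrow> real) \<Rightarrow> bool" where
  "admissible_phi \<phi> \<longleftrightarrow> smooth \<phi>
     \<and> (\<forall>x y. norm x = norm y \<longrightarrow> \<phi> x = \<phi> y)
     \<and> (\<forall>x. norm x \<le> 1 \<longrightarrow> \<phi> x = (norm x)\<^sup>2)
     \<and> (\<forall>x. norm x \<ge> 2 \<longrightarrow> \<phi> x = 0)
     \<and> (\<forall>js. \<exists>C. \<forall>x. x \<noteq> 0 \<longrightarrow> \<bar>pdl js \<phi> x\<bar> \<le> C * norm x powr (2 - real (length js)))"

definition wR :: "(R3 \<Rightarrow> real) \<Rightarrow> real \<Rightarrow> R3 \<Rightarrow> real" where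
  "wR \<phi> R x = R\<^sup>2 * \<phi> ((1 / R) *\<^sub>R x)"

definition W :: "R3 \<Rightarrow> real" where
  "W x = (1 + (norm x)\<^sup>2 / 3) powr (-1/2)"

definition Fc :: "(R3 \<Rightarrow> real) \<Rightarrow> ereal \<Rightarrow> (R3 \<Rightarrow> complex) \<Rightarrow> real" where
  "Fc \<phi> R u =
    (if R = \<infinity> then
       8 * ((LINT x|lborel. (\<Sum>j\<in>UNIV. (cmod (pd j u x))\<^sup>2)) - (LINT x|lborel. cmod (u x) ^ 6))
     else
       (let w = wR \<phi> (real_of_ereal R) in
        LINT x|lborel.
          (- laplacian (laplacian w) x) * (cmod (u x))\<^sup>2
          + 4 * (\<Sum>j\<in>UNIV. \<Sum>k\<in>UNIV. Re (cnj (pd j u x) * pd k u x) * pd j (pd k w) x)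
          - 4/3 * laplacian w x * cmod (u x) ^ 6))"

end

theory Submission
  imports Defs
begin

text \<open>
  Write \<open>v\<close> for the rescaled ground state \<open>\<lambda>\<^sup>1\<^sup>/\<^sup>2 W(\<lambda>x)\<close>; it solves \<open>-\<Delta>v = v\<^sup>5\<close>, and the phase
  \<open>e\<^sup>i\<^sup>\<theta>\<close> drops out of every term of \<open>F\<^sup>c\<^sub>R\<close>. For finite \<open>R\<close> the integrand of \<open>F\<^sup>c\<^sub>R[v]\<close> is,
  thanks to the equation, the divergence of an explicit flux built from \<open>v\<close>, \<open>\<nabla>v\<close> and derivatives of
  \<open>w\<^sub>R\<close> (a localized Pohozaev identity). The flux has compact support, so its divergence integrates
  to zero. For \<open>R = \<infinity>\<close> let \<open>R \<rightarrow> \<infinity>\<close>: since \<open>w\<^sub>R = |x|\<^sup>2\<close> on the ball of radius \<open>R\<close>, the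
  integrands converge pointwise to \<open>8(|\<nabla>v|\<^sup>2 - v\<^sup>6)\<close>, while the scaling bounds on \<open>w\<^sub>R\<close> and the decay
  of \<open>v\<close> dominate them by \<open>C (1 + |x|\<^sup>2)\<^sup>-\<^sup>2\<close>, which is integrable on \<open>\<real>\<^sup>3\<close>. Dominated convergence
  gives \<open>\<integral>|\<nabla>v|\<^sup>2 = \<integral>v\<^sup>6\<close>.
\<close>

section \<open>Partial derivatives\<close>

text \<open>\<open>pd\<close> is a \<open>vector_derivative\<close>, hence junk where the derivative does not exist; \<open>has_pd\<close>
  records existence.\<close>
definition has_pd :: "3 \<Rightarrow> (R3 \<Rightarrow> real) \<Rightarrow> R3 \<Rightarrow> real \<Rightarrow> bool" where
  "has_pd j f x D \<longleftrightarrow> ((\<lambda>t. f (x + t *\<^sub>R axis j 1)) has_real_derivative D) (at 0)"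

lemma has_pd_imp_pd_eq: "has_pd j f x D \<Longrightarrow> pd j f x = D"
  unfolding has_pd_def pd_def
  by (simp add: has_real_derivative_iff_has_vector_derivative vector_derivative_at)

lemma has_pd_pd:
  "(\<lambda>t. f (x + t *\<^sub>R axis j 1)) differentiable (at 0) \<Longrightarrow> has_pd j f x (pd j f x)"
  unfolding has_pd_def pd_def
  by (simp add: has_real_derivative_iff_has_vector_derivative vector_derivative_works[symmetric])

lemma has_pd_imp_differentiable: "has_pd j f x D \<Longrightarrow> (\<lambda>t. f (x + t *\<^sub>R axis j 1)) differentiable (at 0)"
  unfolding has_pd_def using real_differentiable_def by blast

lemma has_pd_const: "has_pd j (\<lambda>y. c) x 0"
  unfolding has_pd_def by simp

lemma has_pd_component: "has_pd j (\<lambda>y. y $ k) x (if j = k then 1 else 0)"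
  unfolding has_pd_def by (auto simp: axis_def intro!: derivative_eq_intros)

lemma has_pd_add:
  "has_pd j f x A \<Longrightarrow> has_pd j g x B \<Longrightarrow> D = A + B \<Longrightarrow> has_pd j (\<lambda>y. f y + g y) x D"
  unfolding has_pd_def by (simp add: DERIV_add)

lemma has_pd_diff:
  "has_pd j f x A \<Longrightarrow> has_pd j g x B \<Longrightarrow> D = A - B \<Longrightarrow> has_pd j (\<lambda>y. f y - g y) x D"
  unfolding has_pd_def by (simp add: DERIV_diff)

lemma has_pd_mult:
  "has_pd j f x A \<Longrightarrow> has_pd j g x B \<Longrightarrow> D = A * g x + f x * B \<Longrightarrow>
   has_pd j (\<lambda>y. f y * g y) x D"
  unfolding has_pd_def by (drule (1) DERIV_mult) (simp add: mult.commute)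

lemma has_pd_power:
  "has_pd j f x A \<Longrightarrow> D = real n * f x ^ (n - 1) * A \<Longrightarrow> has_pd j (\<lambda>y. f y ^ n) x D"
  unfolding has_pd_def by (drule DERIV_power[where n=n]) (simp add: mult_ac)

lemma has_pd_sum:
  "finite S \<Longrightarrow> (\<And>i. i \<in> S \<Longrightarrow> has_pd j (f i) x (A i)) \<Longrightarrow> D = (\<Sum>i\<in>S. A i) \<Longrightarrow>
   has_pd j (\<lambda>y. \<Sum>i\<in>S. f i y) x D"
  unfolding has_pd_def by (simp add: DERIV_sum)

lemma has_pd_compose:
  "has_pd j f x A \<Longrightarrow> (h has_real_derivative B) (at (f x)) \<Longrightarrow> D = B * A \<Longrightarrow>
   has_pd j (\<lambda>y. h (f y)) x D"
  unfolding has_pd_def by (simp only:) (rule DERIV_chain2, auto)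

lemma has_pd_minus: "has_pd j f x A \<Longrightarrow> D = - A \<Longrightarrow> has_pd j (\<lambda>y. - f y) x D"
  unfolding has_pd_def by (simp add: DERIV_minus)

lemma has_pd_divide_const: "has_pd j f x A \<Longrightarrow> D = A / c \<Longrightarrow> has_pd j (\<lambda>y. f y / c) x D"
  unfolding has_pd_def by (simp add: DERIV_cdivide)

lemma has_pd_divide:
  assumes "has_pd j f x A" "has_pd j g x B" "g x \<noteq> 0" "D = (A * g x - f x * B) / (g x)\<^sup>2"
  shows "has_pd j (\<lambda>y. f y / g y) x D"
  using DERIV_divide[OF assms(1,2)[unfolded has_pd_def]] assms(3,4) unfolding has_pd_def
  by (simp add: power2_eq_square)

lemma has_pd_sqrt:
  assumes "has_pd j f x A" "0 < f x" "D = A / (2 * sqrt (f x))"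
  shows "has_pd j (\<lambda>y. sqrt (f y)) x D"
  by (rule has_pd_compose[OF assms(1) DERIV_real_sqrt[OF assms(2)]])
    (use assms(2) in \<open>simp add: assms(3) field_simps\<close>)

text \<open>As with \<open>derivative_eq_intros\<close>, the derivative is a variable constrained by an equation,
  so that \<open>auto intro!\<close> can chain these rules and leave the algebra to the simplifier.\<close>
lemmas has_pd_eq_intros =
  has_pd_const has_pd_component has_pd_add has_pd_diff has_pd_minus has_pd_mult has_pd_divide_const
  has_pd_power has_pd_sum

lemma has_pd_inner_self: "has_pd j (\<lambda>y. y \<bullet> y) x (2 * x $ j)"
proof -
  have "(\<lambda>y::R3. y \<bullet> y) = (\<lambda>y. \<Sum>i\<in>UNIV. y $ i * y $ i)"
    by (simp add: inner_vec_def fun_eq_iff)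
  moreover have "has_pd j (\<lambda>y. \<Sum>i\<in>UNIV. y $ i * y $ i) x (2 * x $ j)"
    by (auto intro!: has_pd_eq_intros simp: if_distrib sum.If_cases)
  ultimately show ?thesis by simp
qed

lemma has_pd_at_shift:
  assumes "has_pd j f (x + t *\<^sub>R axis j 1) D"
  shows "((\<lambda>s. f (x + s *\<^sub>R axis j 1)) has_real_derivative D) (at t)"
proof -
  have "((\<lambda>s. f (x + (s + t) *\<^sub>R axis j 1)) has_real_derivative D) (at 0)"
    using assms unfolding has_pd_def by (simp add: algebra_simps)
  then show ?thesis using DERIV_shift[of "\<lambda>s. f (x + s *\<^sub>R axis j 1)" D 0 t] by simp
qed

lemma pd_cong_open:
  assumes "open U" "x \<in> U" "\<And>y. y \<in> U \<Longrightarrow> f y = g y"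
  shows "pd j f x = pd j g x"
proof -
  have "((\<lambda>t::real. x + t *\<^sub>R axis j 1) \<longlongrightarrow> x + 0 *\<^sub>R axis j 1) (nhds 0)"
    by (intro tendsto_intros filterlim_ident)
  then have "\<forall>\<^sub>F t in nhds 0. x + t *\<^sub>R axis j 1 \<in> U"
    using assms(1,2) by (auto intro: topological_tendstoD)
  then have "\<forall>\<^sub>F t in nhds 0. t \<in> UNIV \<longrightarrow> f (x + t *\<^sub>R axis j 1) = g (x + t *\<^sub>R axis j 1)"
    by eventually_elim (simp add: assms(3))
  then show ?thesis unfolding pd_def by (intro vector_derivative_cong_eq) auto
qed

lemma pdl_cong_open:
  assumes "open U" "x \<in> U" "\<And>y. y \<in> U \<Longrightarrow> f y = g y"
  shows "pdl js f x = pdl js g x"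
  using assms(2)
proof (induction js arbitrary: x)
  case Nil then show ?case using assms(3) by simp
next
  case (Cons j js)
  then show ?case using pd_cong_open[OF assms(1) Cons.prems, of "pdl js f" "pdl js g"] by simp
qed

lemma pd_const: "pd j (\<lambda>y. c) = (\<lambda>x. 0::real)"
  using has_pd_imp_pd_eq[OF has_pd_const] by blast

lemma pdl_const: "pdl js (\<lambda>y. c) = (\<lambda>y. if js = [] then c else 0::real)"
  by (induction js) (auto simp: pd_const)

lemma pdl_eq_0_outside:
  fixes f :: "R3 \<Rightarrow> real"
  assumes "\<And>y. r < norm y \<Longrightarrow> f y = 0" "r < norm x"
  shows "pdl js f x = 0"
proof -
  have "open {y::R3. r < norm y}"
    by (intro open_Collect_less continuous_intros)
  then show ?thesis
    using pdl_cong_open[of "{y. r < norm y}" x f "\<lambda>_. 0" js] assms by (simp add: pdl_const)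
qed

lemma pdl_append: "pdl (a @ b) f = pdl a (pdl b f)"
  by (induction a) auto

lemma smooth_pdl: "smooth f \<Longrightarrow> smooth (pdl js f)"
  unfolding smooth_def by (simp add: pdl_append[symmetric])

lemma smooth_pd: "smooth f \<Longrightarrow> smooth (pd j f)"
  using smooth_pdl[of f "[j]"] by simp

lemma smooth_imp_continuous: "smooth f \<Longrightarrow> continuous_on UNIV f"
  unfolding smooth_def by (metis pdl.simps(1))

lemma smooth_has_pd: "smooth f \<Longrightarrow> has_pd j f x (pd j f x)"
  unfolding smooth_def by (metis has_pd_pd pdl.simps(1))

lemma smoothI:
  assumes "\<And>js. continuous_on UNIV (pdl js f)" and "\<And>js j x. \<exists>D. has_pd j (pdl js f) x D"
  shows "smooth f"
  unfolding smooth_def using assms has_pd_imp_differentiable by blast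

lemma smooth_const: "smooth (\<lambda>x. c)"
  by (rule smoothI) (auto simp: pdl_const intro: has_pd_const)

lemma smooth_add:
  assumes "smooth f" "smooth g"
  shows "smooth (\<lambda>x. f x + g x)"
proof -
  have pdl_add: "pdl js (\<lambda>x. f x + g x) = (\<lambda>x. pdl js f x + pdl js g x)" for js
    by (induction js) (auto intro!: has_pd_imp_pd_eq has_pd_add smooth_has_pd smooth_pdl assms)
  show ?thesis
  proof (rule smoothI)
    show "continuous_on UNIV (pdl js (\<lambda>x. f x + g x))" for js
      unfolding pdl_add by (intro continuous_on_add smooth_imp_continuous smooth_pdl assms)
    show "\<exists>D. has_pd j (pdl js (\<lambda>x. f x + g x)) x D" for js j x
      unfolding pdl_add by (blast intro: has_pd_add smooth_has_pd smooth_pdl assms)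
  qed
qed

lemma smooth_sum: "finite S \<Longrightarrow> (\<And>i. i \<in> S \<Longrightarrow> smooth (f i)) \<Longrightarrow> smooth (\<lambda>x. \<Sum>i\<in>S. f i x)"
  by (induction S rule: finite_induct) (auto intro: smooth_const smooth_add)

lemma laplacian_eq: "laplacian f = (\<lambda>x. \<Sum>j\<in>UNIV. pd j (pd j f) x)"
  by (simp add: laplacian_def fun_eq_iff)

lemma smooth_laplacian: "smooth f \<Longrightarrow> smooth (laplacian f)"
  unfolding laplacian_eq by (intro smooth_sum smooth_pd) auto

lemma pd_sum:
  "finite S \<Longrightarrow> (\<And>i. i \<in> S \<Longrightarrow> smooth (f i)) \<Longrightarrow>
   pd j (\<lambda>x. \<Sum>i\<in>S. f i x) x = (\<Sum>i\<in>S. pd j (f i) x)"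
  by (auto intro!: has_pd_imp_pd_eq has_pd_sum smooth_has_pd)

lemma laplacian_laplacian_eq:
  assumes "smooth f"
  shows "laplacian (laplacian f) x = (\<Sum>j\<in>UNIV. \<Sum>k\<in>UNIV. pdl [j, j, k, k] f x)"
proof -
  have "pd j (laplacian f) = (\<lambda>y. \<Sum>k\<in>UNIV. pd j (pd k (pd k f)) y)" for j
    unfolding laplacian_eq by (rule ext, rule pd_sum) (auto intro: smooth_pd assms)
  then have "pd j (pd j (laplacian f)) x = (\<Sum>k\<in>UNIV. pd j (pd j (pd k (pd k f))) x)" for j
    by (simp add: pd_sum smooth_pd assms)
  then show ?thesis by (simp add: laplacian_def)
qed

section \<open>Integrals over \<open>\<real>\<^sup>n\<close>\<close>

lemma integrable_vanishing_outside_ball: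
  fixes G :: "'a::euclidean_space \<Rightarrow> real"
  assumes "continuous_on UNIV G" "\<And>x. r < norm x \<Longrightarrow> G x = 0"
  shows "integrable lborel G"
proof -
  have "integrable lborel (\<lambda>x. indicator (cball 0 r) x *\<^sub>R G x)"
    by (rule borel_integrable_compact) (auto intro: continuous_on_subset[OF assms(1)])
  moreover have "(\<lambda>x. indicator (cball 0 r) x *\<^sub>R G x) = G"
    using assms(2) by (auto simp: fun_eq_iff indicator_def not_le)
  ultimately show ?thesis by simp
qed

lemma bounded_vanishing_outside_ball:
  fixes G :: "'a::euclidean_space \<Rightarrow> real"
  assumes "continuous_on UNIV G" "\<And>x. r < norm x \<Longrightarrow> G x = 0"
  obtains M where "\<And>x. \<bar>G x\<bar> \<le> M"
proof -
  have "compact (G ` cball 0 r)"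
    by (rule compact_continuous_image) (auto intro: continuous_on_subset[OF assms(1)])
  then obtain M where M: "\<And>y. y \<in> G ` cball 0 r \<Longrightarrow> norm y \<le> M"
    using compact_imp_bounded bounded_iff by metis
  have "\<bar>G x\<bar> \<le> max M 0" for x
    using M[of "G x"] assms(2)[of x] by (cases "norm x \<le> r") auto
  then show ?thesis using that by blast
qed

lemma integral_translate_eq:
  fixes G :: "'a::euclidean_space \<Rightarrow> real"
  assumes "continuous_on UNIV G"
  shows "integral\<^sup>L lborel (\<lambda>x. G (a + x)) = integral\<^sup>L lborel G"
proof -
  have "integral\<^sup>L lborel G = integral\<^sup>L (distr lborel borel ((+) a)) G"
    by (simp add: lborel_distr_plus)
  also have "\<dots> = integral\<^sup>L lborel (\<lambda>x. G (a + x))"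
    by (rule integral_distr) (auto intro: borel_measurable_continuous_onI assms)
  finally show ?thesis by simp
qed

lemma integral_translate_diff_eq_0:
  fixes G :: "'a::euclidean_space \<Rightarrow> real"
  assumes G: "continuous_on UNIV G" and supp: "\<And>x. r < norm x \<Longrightarrow> G x = 0"
  shows "integral\<^sup>L lborel (\<lambda>x. G (x + a) - G x) = 0"
proof -
  have "integrable lborel (\<lambda>x. G (a + x))"
  proof (rule integrable_vanishing_outside_ball[where r="r + norm a"])
    show "continuous_on UNIV (\<lambda>x. G (a + x))"
      by (intro continuous_on_compose2[OF G] continuous_intros) auto
    show "G (a + x) = 0" if "r + norm a < norm x" for x
      using that norm_triangle_ineq2[of x "- a"] supp[of "a + x"] by (simp add: add.commute)
  qed
  moreover have "integrable lborel G"
    using G supp by (rule integrable_vanishing_outside_ball)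
  ultimately show ?thesis
    using integral_translate_eq[OF G, of a] by (simp add: add.commute)
qed

lemma abs_difference_quotient_le:
  assumes "\<And>x. has_pd j G x (g x)" "\<And>x. \<bar>g x\<bar> \<le> M" "0 < t"
  shows "\<bar>(G (x + t *\<^sub>R axis j 1) - G x) / t\<bar> \<le> M"
proof -
  have "\<exists>z>0. z < t \<and> G (x + t *\<^sub>R axis j 1) - G (x + 0 *\<^sub>R axis j 1) = (t - 0) * g (x + z *\<^sub>R axis j 1)"
    using assms(1,3) by (intro MVT2) (auto intro: has_pd_at_shift)
  then obtain z where "G (x + t *\<^sub>R axis j 1) - G x = t * g (x + z *\<^sub>R axis j 1)"
    by auto
  then show ?thesis
    using assms(2)[of "x + z *\<^sub>R axis j 1"] assms(3) by simp
qed

lemma difference_quotient_tendsto: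
  assumes "has_pd j G x D"
  shows "(\<lambda>n. (G (x + (1 / Suc n) *\<^sub>R axis j 1) - G x) / (1 / Suc n)) \<longlonglongrightarrow> D"
proof -
  have "((\<lambda>t. (G (x + t *\<^sub>R axis j 1) - G x) / t) \<longlongrightarrow> D) (at 0)"
    using assms by (simp add: has_pd_def DERIV_def)
  moreover have "(\<lambda>n. 1 / real (Suc n)) \<longlonglongrightarrow> 0"
    using LIMSEQ_inverse_real_of_nat by (simp add: divide_inverse)
  then have "filterlim (\<lambda>n. 1 / real (Suc n)) (at 0) sequentially"
    unfolding filterlim_at by (auto intro!: always_eventually)
  ultimately show ?thesis
    by (rule filterlim_compose)
qed

lemma integral_pd_eq_0:
  fixes G g :: "R3 \<Rightarrow> real"
  assumes has_pd: "\<And>x. has_pd j G x (g x)"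
    and G: "continuous_on UNIV G" and g: "continuous_on UNIV g"
    and supp: "\<And>x. r < norm x \<Longrightarrow> G x = 0"
  shows "integral\<^sup>L lborel g = 0"
proof -
  define h :: "nat \<Rightarrow> real" where "h n = 1 / Suc n" for n
  define quot where "quot n x = (G (x + h n *\<^sub>R axis j 1) - G x) / h n" for n x
  have h: "0 < h n" "h n \<le> 1" for n
    by (auto simp: h_def)
  have "pdl [j] G x = 0" if "r < norm x" for x
    using supp that by (rule pdl_eq_0_outside)
  then have "g x = 0" if "r < norm x" for x
    using that has_pd_imp_pd_eq[OF has_pd] by simp
  then obtain M where M: "\<And>x. \<bar>g x\<bar> \<le> M"
    using bounded_vanishing_outside_ball[OF g] by blast
  have quot_bound: "\<bar>quot n x\<bar> \<le> M * indicator (cball 0 (r + 1)) x" for n x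
  proof (cases "r + 1 < norm x")
    case True
    then have "r < norm (x + h n *\<^sub>R axis j 1)"
      using norm_triangle_ineq2[of x "- (h n *\<^sub>R axis j 1)"] h[of n] by simp
    then show ?thesis
      using True supp[of x] supp[of "x + h n *\<^sub>R axis j 1"] by (simp add: quot_def)
  qed (use abs_difference_quotient_le[OF has_pd M h(1)] in \<open>simp add: quot_def\<close>)
  have "(\<lambda>n. integral\<^sup>L lborel (quot n)) \<longlonglongrightarrow> integral\<^sup>L lborel g"
  proof (rule integral_dominated_convergence[where w="\<lambda>x. M * indicator (cball 0 (r + 1)) x"])
    show "integrable lborel (\<lambda>x. M * indicator (cball (0::R3) (r + 1)) x)"
      using emeasure_bounded_finite[of "cball (0::R3) (r + 1)"]
      by (intro integrable_mult_right integrable_real_indicator) auto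
    have "continuous_on UNIV (quot n)" for n
      unfolding quot_def using h(1)[THEN less_imp_neq]
      by (intro continuous_intros continuous_on_compose2[OF G]) auto
    then show "quot n \<in> borel_measurable lborel" for n
      by (simp add: borel_measurable_continuous_onI)
    show "AE x in lborel. (\<lambda>n. quot n x) \<longlonglongrightarrow> g x"
      using difference_quotient_tendsto[OF has_pd] by (simp add: quot_def h_def)
  qed (use g quot_bound in \<open>auto intro: borel_measurable_continuous_onI\<close>)
  moreover have "integral\<^sup>L lborel (quot n) = 0" for n
  proof -
    have "integral\<^sup>L lborel (\<lambda>x. G (x + h n *\<^sub>R axis j 1) - G x) = 0"
      using G supp by (rule integral_translate_diff_eq_0)
    then show ?thesis
      by (simp add: quot_def[abs_def])
  qed
  ultimately show ?thesis
    using LIMSEQ_unique by (simp add: LIMSEQ_const_iff)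
qed

lemma integrable_one_plus_abs_powr:
  assumes "1 < a"
  shows "integrable lborel (\<lambda>t::real. (1 + \<bar>t\<bar>) powr (-a))"
proof -
  define f where "f t = indicator {1..} t * t powr (-a)" for t :: real
  have "(\<lambda>t::real. t powr (-a)) integrable_on {1..}"
    using has_integral_powr_to_inf[of "-a" 1] assms unfolding integrable_on_def by auto
  then have "(\<lambda>t::real. t powr (-a)) absolutely_integrable_on {1..}"
    by (rule nonnegative_absolutely_integrable_1) simp
  then have "integrable lborel f"
    unfolding set_integrable_def f_def by (subst (asm) integrable_completion) auto
  then have "integrable lborel (\<lambda>t. f (1 + 1 * t) + f (1 + (-1) * t))"
    using lborel_integrable_real_affine_iff[of 1 f 1] lborel_integrable_real_affine_iff[of "-1" f 1]
    by simp
  then show ?thesis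
  proof (rule Bochner_Integration.integrable_bound)
    have "(1 + \<bar>t\<bar>) powr (-a) \<le> f (1 + 1 * t) + f (1 + (-1) * t)" for t
      by (cases "0 \<le> t") (auto simp: f_def)
    then show "AE t in lborel. norm ((1 + \<bar>t\<bar>) powr (-a)) \<le> norm (f (1 + 1 * t) + f (1 + (-1) * t))"
      by (auto simp: f_def)
  qed (auto intro!: borel_measurable_continuous_onI continuous_intros)
qed

lemma integrable_prod_Basis:
  fixes h :: "real \<Rightarrow> real"
  assumes "integrable lborel h"
  shows "integrable lborel (\<lambda>x::'a::euclidean_space. \<Prod>b\<in>Basis. h (x \<bullet> b))"
proof -
  have h[measurable]: "h \<in> borel_measurable borel"
    using assms by (auto dest: borel_measurable_integrable)
  have coords: "(\<Sum>b'\<in>Basis. f b' *\<^sub>R b') \<bullet> b = f b" if "b \<in> (Basis :: 'a set)" for f b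
    using that by (simp add: inner_sum_left inner_Basis if_distrib sum.If_cases)
  have "integrable (\<Pi>\<^sub>M b\<in>(Basis::'a set). lborel) (\<lambda>f. \<Prod>b\<in>Basis. h (f b))"
    using assms by (intro product_sigma_finite.product_integrable_prod)
      (auto simp: product_sigma_finite_def lborel.sigma_finite_measure_axioms)
  then have "integrable (\<Pi>\<^sub>M b\<in>(Basis::'a set). lborel) (\<lambda>f. \<Prod>b\<in>Basis. h ((\<Sum>b'\<in>Basis. f b' *\<^sub>R b') \<bullet> b))"
    by (simp add: coords cong: prod.cong)
  then show ?thesis
    by (subst lborel_eq, subst integrable_distr_eq) auto
qed

lemma one_plus_abs_inner_Basis_sq_le:
  fixes x :: "'a::euclidean_space"
  assumes "b \<in> Basis"
  shows "(1 + \<bar>x \<bullet> b\<bar>)\<^sup>2 \<le> 2 * (1 + x \<bullet> x)"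
proof -
  define t where "t = \<bar>x \<bullet> b\<bar>"
  have "t \<le> norm x"
    using assms by (simp add: t_def Basis_le_norm)
  then have "t\<^sup>2 \<le> (norm x)\<^sup>2"
    by (intro power_mono) (auto simp: t_def)
  then have "t\<^sup>2 \<le> x \<bullet> x"
    by (simp add: power2_norm_eq_inner)
  moreover have "0 \<le> (t - 1)\<^sup>2"
    by simp
  ultimately show ?thesis
    by (simp add: t_def power2_eq_square algebra_simps)
qed

lemma one_plus_inner_self_powr_le_prod_Basis:
  fixes x :: "'a::euclidean_space"
  assumes "0 < p"
  defines "a \<equiv> 2 * p / DIM('a)"
  shows "(1 + x \<bullet> x) powr (-p) \<le> 2 powr p * (\<Prod>b\<in>Basis. (1 + \<bar>x \<bullet> b\<bar>) powr (-a))"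
proof -
  define n where "n = real DIM('a)"
  define \<rho> where "\<rho> = 2 * (1 + x \<bullet> x)"
  have n: "0 < n" and \<rho>: "0 < \<rho>"
    by (auto simp: n_def \<rho>_def add_pos_nonneg)
  have "\<rho> powr (-p / n) \<le> ((1 + \<bar>x \<bullet> b\<bar>)\<^sup>2) powr (-p / n)" if "b \<in> Basis" for b
    using one_plus_abs_inner_Basis_sq_le[OF that, of x] assms n
    by (intro powr_mono2') (auto simp: \<rho>_def)
  also have "((1 + \<bar>x \<bullet> b\<bar>)\<^sup>2) powr (-p / n) = (1 + \<bar>x \<bullet> b\<bar>) powr (-a)" for b
    using n by (simp add: powr_powr a_def n_def flip: powr_numeral)
  finally have prod_le: "(\<Prod>b\<in>(Basis::'a set). \<rho> powr (-p / n)) \<le> (\<Prod>b\<in>Basis. (1 + \<bar>x \<bullet> b\<bar>) powr (-a))"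
    by (intro prod_mono) auto
  have "\<rho> powr (-p) = 2 powr (-p) * (1 + x \<bullet> x) powr (-p)"
    unfolding \<rho>_def by (rule powr_mult)
  moreover have "2 powr p * 2 powr (-p) = (1::real)"
    by (simp add: powr_add[symmetric])
  ultimately have "(1 + x \<bullet> x) powr (-p) = 2 powr p * \<rho> powr (-p)"
    by (simp add: mult.assoc[symmetric])
  also have "\<rho> powr (-p) = (\<Prod>b\<in>(Basis::'a set). \<rho> powr (-p / n))"
    using \<rho> n by (simp add: n_def powr_powr flip: powr_realpow)
  also have "2 powr p * \<dots> \<le> 2 powr p * (\<Prod>b\<in>Basis. (1 + \<bar>x \<bullet> b\<bar>) powr (-a))"
    using prod_le by (rule mult_left_mono) simp
  finally show ?thesis .
qed

lemma integrable_one_plus_inner_self_powr: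
  assumes "real DIM('a) < 2 * p"
  shows "integrable lborel (\<lambda>x::'a::euclidean_space. (1 + x \<bullet> x) powr (-p))"
proof -
  define a where "a = 2 * p / DIM('a)"
  have a: "1 < a" and p: "0 < p"
    using assms DIM_positive[where 'a='a] by (auto simp: a_def field_simps)
  have "integrable lborel (\<lambda>x::'a. 2 powr p * (\<Prod>b\<in>Basis. (1 + \<bar>x \<bullet> b\<bar>) powr (-a)))"
    by (intro integrable_mult_right integrable_prod_Basis integrable_one_plus_abs_powr a)
  then show ?thesis
    by (rule Bochner_Integration.integrable_bound)
      (use one_plus_inner_self_powr_le_prod_Basis[OF p] in \<open>auto simp: a_def
          intro!: borel_measurable_continuous_onI continuous_intros intro: order_trans[OF _ abs_ge_self]\<close>)
qed

lemma integrable_const_div_one_plus_inner_self_sq: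
  "integrable lborel (\<lambda>x::R3. c / (1 + x \<bullet> x)\<^sup>2)"
proof -
  have "(1 + x \<bullet> x) powr (-2) = 1 / (1 + x \<bullet> x)\<^sup>2" for x :: R3
    by (simp add: powr_minus_divide add_pos_nonneg)
  then have "integrable lborel (\<lambda>x::R3. 1 / (1 + x \<bullet> x)\<^sup>2)"
    using integrable_one_plus_inner_self_powr[where 'a=R3 and p=2] by simp
  then have "integrable lborel (\<lambda>x::R3. c * (1 / (1 + x \<bullet> x)\<^sup>2))"
    by (rule integrable_mult_right)
  then show ?thesis
    by simp
qed

section \<open>The rescaled cutoff \<open>w\<^sub>R\<close>\<close>

lemma has_pd_rescale:
  assumes "has_pd j g ((1/R) *\<^sub>R x) D" "R \<noteq> 0"
  shows "has_pd j (\<lambda>z. g ((1/R) *\<^sub>R z)) x (D / R)"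
proof -
  have "((\<lambda>s. g ((1/R) *\<^sub>R x + s *\<^sub>R axis j 1)) has_real_derivative D) (at (0 / R))"
    using assms(1) unfolding has_pd_def by simp
  moreover have "((\<lambda>t. t / R) has_real_derivative 1 / R) (at 0)"
    using assms(2) by (auto intro!: derivative_eq_intros)
  ultimately have "((\<lambda>t. g ((1/R) *\<^sub>R x + (t / R) *\<^sub>R axis j 1)) has_real_derivative D * (1 / R)) (at 0)"
    by (rule DERIV_chain2)
  then show ?thesis
    unfolding has_pd_def by (simp add: scaleR_add_right)
qed

lemma has_pd_rescaled_pdl:
  assumes "smooth \<phi>" "R > 0"
  shows "has_pd j (\<lambda>z. c * pdl js \<phi> ((1/R) *\<^sub>R z)) x (c * (pd j (pdl js \<phi>) ((1/R) *\<^sub>R x) / R))"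
  using assms by (intro has_pd_mult[OF has_pd_const has_pd_rescale]) (auto intro: smooth_has_pd smooth_pdl)

lemma pdl_wR:
  assumes "smooth \<phi>" "R > 0"
  shows "pdl js (wR \<phi> R) = (\<lambda>x. R\<^sup>2 / R ^ length js * pdl js \<phi> ((1/R) *\<^sub>R x))"
proof (induction js)
  case Nil
  then show ?case by (simp add: wR_def fun_eq_iff)
next
  case (Cons j js)
  show ?case
    using has_pd_imp_pd_eq[OF has_pd_rescaled_pdl[OF assms, of j "R\<^sup>2 / R ^ length js" js]]
    by (simp add: Cons fun_eq_iff)
qed

lemma smooth_wR:
  assumes "smooth \<phi>" "R > 0"
  shows "smooth (wR \<phi> R)"
proof (rule smoothI)
  show "continuous_on UNIV (pdl js (wR \<phi> R))" for js
    unfolding pdl_wR[OF assms]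
    by (intro continuous_intros continuous_on_compose2[OF smooth_imp_continuous[OF smooth_pdl[OF assms(1)]]]) auto
  show "\<exists>D. has_pd j (pdl js (wR \<phi> R)) x D" for js j x
    unfolding pdl_wR[OF assms] using has_pd_rescaled_pdl[OF assms] by blast
qed

lemma wR_eq_0:
  assumes "admissible_phi \<phi>" "R > 0" "2 * R < norm y"
  shows "wR \<phi> R y = 0"
proof -
  have "2 \<le> norm ((1/R) *\<^sub>R y)"
    using assms(2,3) by (simp add: field_simps)
  then show ?thesis using assms(1) by (simp add: wR_def admissible_phi_def)
qed

lemma wR_eq_inner_self:
  assumes "admissible_phi \<phi>" "R > 0" "norm y < R"
  shows "wR \<phi> R y = y \<bullet> y"
proof -
  have "norm ((1/R) *\<^sub>R y) \<le> 1"
    using assms(2,3) by (simp add: field_simps)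
  then have "\<phi> ((1/R) *\<^sub>R y) = (norm y / R)\<^sup>2"
    using assms(1,2) by (simp add: admissible_phi_def)
  then show ?thesis
    using assms(2) by (simp add: wR_def power2_norm_eq_inner[symmetric] field_simps)
qed

lemma pdl_wR_eq_pdl_inner_self:
  assumes "admissible_phi \<phi>" "R > 0" "norm x < R"
  shows "pdl js (wR \<phi> R) x = pdl js (\<lambda>y. y \<bullet> y) x"
proof (rule pdl_cong_open[of "{y. norm y < R}"])
  show "open {y::R3. norm y < R}"
    by (intro open_Collect_less continuous_intros)
qed (use assms wR_eq_inner_self in auto)

lemma pd_pd_wR_inside:
  assumes "admissible_phi \<phi>" "R > 0" "norm x < R"
  shows "pd j (pd k (wR \<phi> R)) x = (if j = k then 2 else 0)"
proof -
  have "pd k (\<lambda>y::R3. y \<bullet> y) = (\<lambda>y. 2 * y $ k)"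
    using has_pd_imp_pd_eq[OF has_pd_inner_self] by blast
  then have "pd j (pd k (\<lambda>y::R3. y \<bullet> y)) x = (if j = k then 2 else 0)"
    by (auto intro!: has_pd_imp_pd_eq has_pd_eq_intros)
  then show ?thesis
    using pdl_wR_eq_pdl_inner_self[OF assms, of "[j, k]"] by simp
qed

lemma laplacian_wR_inside:
  assumes "admissible_phi \<phi>" "R > 0" "norm x < R"
  shows "laplacian (wR \<phi> R) x = 6"
  using pd_pd_wR_inside[OF assms] by (simp add: laplacian_def)

lemma laplacian_laplacian_wR_inside:
  assumes "admissible_phi \<phi>" "R > 0" "norm x < R"
  shows "laplacian (laplacian (wR \<phi> R)) x = 0"
proof -
  have "pdl [j, j] (laplacian (wR \<phi> R)) x = pdl [j, j] (\<lambda>y. 6) x" for j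
  proof (rule pdl_cong_open[of "{y. norm y < R}"])
    show "open {y::R3. norm y < R}"
      by (intro open_Collect_less continuous_intros)
  qed (use assms laplacian_wR_inside in auto)
  then show ?thesis
    by (simp add: laplacian_def pdl_const)
qed

lemma pdl_wR_bound:
  assumes "smooth \<phi>" "R > 0" "x \<noteq> 0"
    and bound: "\<And>y. y \<noteq> 0 \<Longrightarrow> \<bar>pdl js \<phi> y\<bar> \<le> C * norm y powr (2 - real (length js))"
  shows "\<bar>pdl js (wR \<phi> R) x\<bar> \<le> C * norm x powr (2 - real (length js))"
proof -
  define e where "e = 2 - real (length js)"
  have "R\<^sup>2 / R ^ length js = R powr e"
    using assms(2) by (simp add: e_def powr_diff powr_realpow)
  then have "\<bar>pdl js (wR \<phi> R) x\<bar> = R powr e * \<bar>pdl js \<phi> ((1/R) *\<^sub>R x)\<bar>"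
    unfolding pdl_wR[OF assms(1,2)] using assms(2) by (simp add: abs_mult)
  also have "\<dots> \<le> R powr e * (C * norm ((1/R) *\<^sub>R x) powr e)"
    using bound[of "(1/R) *\<^sub>R x"] assms(2,3) unfolding e_def by (intro mult_left_mono) auto
  also have "\<dots> = C * (R powr e * (norm x / R) powr e)"
    using assms(2) by simp
  also have "R powr e * (norm x / R) powr e = norm x powr e"
    using assms(2) by (simp add: powr_divide)
  finally show ?thesis unfolding e_def .
qed

lemma admissible_phi_pdl_bound:
  assumes "admissible_phi \<phi>"
  obtains C where "\<And>js x. x \<noteq> 0 \<Longrightarrow> \<bar>pdl js \<phi> x\<bar> \<le> C js * norm x powr (2 - real (length js))"
  using assms unfolding admissible_phi_def by metis

lemma pd_pd_wR_bound:
  assumes "admissible_phi \<phi>"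
  obtains B where "\<And>R x j k. 1 \<le> R \<Longrightarrow> \<bar>pd j (pd k (wR \<phi> R)) x\<bar> \<le> B"
proof -
  obtain C where C: "\<And>js x. x \<noteq> 0 \<Longrightarrow> \<bar>pdl js \<phi> x\<bar> \<le> C js * norm x powr (2 - real (length js))"
    using admissible_phi_pdl_bound[OF assms] by blast
  define B where "B = 2 + (\<Sum>p\<in>UNIV. \<bar>C [fst p, snd p]\<bar>)"
  have "\<bar>pd j (pd k (wR \<phi> R)) x\<bar> \<le> B" if "1 \<le> R" for R x j k
  proof (cases "x = 0")
    case True
    then show ?thesis
      using pd_pd_wR_inside[OF assms, of R x j k] that by (auto simp: B_def intro!: sum_nonneg)
  next
    case False
    have "\<bar>C [j, k]\<bar> \<le> (\<Sum>p\<in>UNIV. \<bar>C [fst p, snd p]\<bar>)"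
      using member_le_sum[of "(j, k)" UNIV "\<lambda>p. \<bar>C [fst p, snd p]\<bar>"] by simp
    moreover have "\<bar>pdl [j, k] (wR \<phi> R) x\<bar> \<le> C [j, k] * norm x powr (2 - real (length [j, k]))"
      using assms that False by (intro pdl_wR_bound C) (auto simp: admissible_phi_def)
    ultimately show ?thesis
      using False by (simp add: B_def)
  qed
  then show ?thesis using that by blast
qed

lemma laplacian_laplacian_wR_bound:
  assumes "admissible_phi \<phi>"
  obtains B where "\<And>R x. 1 \<le> R \<Longrightarrow> \<bar>laplacian (laplacian (wR \<phi> R)) x\<bar> \<le> B / (1 + x \<bullet> x)"
proof -
  obtain C where C: "\<And>js x. x \<noteq> 0 \<Longrightarrow> \<bar>pdl js \<phi> x\<bar> \<le> C js * norm x powr (2 - real (length js))"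
    using admissible_phi_pdl_bound[OF assms] by blast
  have sphi: "smooth \<phi>"
    using assms by (simp add: admissible_phi_def)
  define S where "S = (\<Sum>j\<in>UNIV. \<Sum>k\<in>UNIV. \<bar>C [j, j, k, k]\<bar>)"
  have S: "0 \<le> S"
    by (auto simp: S_def intro: sum_nonneg)
  have "\<bar>laplacian (laplacian (wR \<phi> R)) x\<bar> \<le> 2 * S / (1 + x \<bullet> x)" if R: "1 \<le> R" for R x
  proof (cases "norm x < R")
    case True
    then show ?thesis
      using laplacian_laplacian_wR_inside[OF assms, of R x] R S by (simp add: add_pos_nonneg)
  next
    case False
    have R_pos: "0 < R"
      using R by simp
    have x: "x \<noteq> 0" "1 \<le> x \<bullet> x"
      using R False by (auto simp: power2_norm_eq_inner[symmetric] intro: one_le_power)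
    have "\<bar>pdl [j, j, k, k] (wR \<phi> R) x\<bar> \<le> C [j, j, k, k] * norm x powr (-2)" for j k
      using pdl_wR_bound[where js="[j, j, k, k]", OF sphi _ x(1) C] R by simp
    also have "C js * norm x powr (-2) \<le> \<bar>C js\<bar> / (x \<bullet> x)" for js
      using x by (simp add: powr_minus_divide power2_norm_eq_inner[symmetric] divide_right_mono)
    finally have "\<bar>laplacian (laplacian (wR \<phi> R)) x\<bar> \<le> (\<Sum>j\<in>UNIV. \<Sum>k\<in>UNIV. \<bar>C [j, j, k, k]\<bar> / (x \<bullet> x))"
      unfolding laplacian_laplacian_eq[OF smooth_wR[OF sphi R_pos]]
      by (intro order_trans[OF sum_abs] sum_mono order_trans[OF sum_abs])
    also have "\<dots> = (2 * S) / (2 * (x \<bullet> x))"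
      by (simp add: S_def sum_divide_distrib)
    also have "\<dots> \<le> 2 * S / (1 + x \<bullet> x)"
      using x S by (intro divide_left_mono) (auto intro!: mult_pos_pos)
    finally show ?thesis .
  qed
  then show ?thesis using that by blast
qed

section \<open>The localized Pohozaev identity\<close>

lemma power6_le_cube_div_sq:
  fixes y :: real
  assumes "1 \<le> \<rho>" "y\<^sup>2 \<le> C / \<rho>"
  shows "y ^ 6 \<le> C ^ 3 / \<rho>\<^sup>2"
proof -
  have C: "0 \<le> C"
    using assms order_trans[OF zero_le_power2 assms(2)] by (simp add: zero_le_divide_iff)
  have "y ^ 6 = (y\<^sup>2) ^ 3"
    by simp
  also have "\<dots> \<le> (C / \<rho>) ^ 3"
    using assms(2) by (intro power_mono) auto
  also have "\<dots> \<le> C ^ 3 / \<rho>\<^sup>2"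
    using assms(1) C by (simp add: power_divide divide_left_mono power_increasing)
  finally show ?thesis .
qed

lemma abs_quadratic_form_le:
  fixes D :: "3 \<Rightarrow> real" and H :: "3 \<Rightarrow> 3 \<Rightarrow> real"
  assumes H: "\<And>j k. \<bar>H j k\<bar> \<le> B" and D: "\<And>k. (D k)\<^sup>2 \<le> E"
  shows "\<bar>\<Sum>j\<in>UNIV. \<Sum>k\<in>UNIV. D j * D k * H j k\<bar> \<le> 9 * (B * E)"
proof -
  have "\<bar>D j * D k * H j k\<bar> \<le> B * E" for j k
  proof -
    have "2 * \<bar>D j * D k\<bar> \<le> (D j)\<^sup>2 + (D k)\<^sup>2"
      using sum_squares_bound[of "\<bar>D j\<bar>" "\<bar>D k\<bar>"] by (simp add: abs_mult)
    then have "\<bar>D j * D k\<bar> \<le> E"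
      using D[of j] D[of k] by linarith
    then have "\<bar>D j * D k\<bar> * \<bar>H j k\<bar> \<le> E * B"
      using H[of j k] by (intro mult_mono) auto
    then show ?thesis by (simp add: abs_mult mult.commute)
  qed
  then have "(\<Sum>j\<in>UNIV. \<Sum>k\<in>UNIV. \<bar>D j * D k * H j k\<bar>) \<le> (\<Sum>j\<in>(UNIV::3 set). \<Sum>k\<in>(UNIV::3 set). B * E)"
    by (intro sum_mono)
  then show ?thesis
    by (intro order_trans[OF sum_abs] order_trans[OF sum_mono[OF sum_abs]]) simp_all
qed

definition pohozaev_density :: "(R3 \<Rightarrow> real) \<Rightarrow> (R3 \<Rightarrow> real) \<Rightarrow> (3 \<Rightarrow> R3 \<Rightarrow> real) \<Rightarrow> R3 \<Rightarrow> real" where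
  "pohozaev_density w v Dv x =
     - laplacian (laplacian w) x * (v x)\<^sup>2
     + 4 * (\<Sum>j\<in>UNIV. \<Sum>k\<in>UNIV. Dv j x * Dv k x * pd j (pd k w) x)
     - 4/3 * laplacian w x * v x ^ 6"

text \<open>Its divergence is \<open>pohozaev_density\<close> exactly when \<open>\<Delta>v = -v\<^sup>5\<close>
  (see \<open>sum_pohozaev_flux_pd\<close>).\<close>
definition pohozaev_flux :: "(R3 \<Rightarrow> real) \<Rightarrow> (R3 \<Rightarrow> real) \<Rightarrow> (3 \<Rightarrow> R3 \<Rightarrow> real) \<Rightarrow> 3 \<Rightarrow> R3 \<Rightarrow> real" where
  "pohozaev_flux w v Dv j x =
     - pd j (laplacian w) x * (v x)\<^sup>2
     + 2 * laplacian w x * v x * Dv j x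
     + 4 * (\<Sum>k\<in>UNIV. pd k w x * Dv j x * Dv k x)
     - 2 * pd j w x * (\<Sum>k\<in>UNIV. (Dv k x)\<^sup>2)
     + 2/3 * pd j w x * v x ^ 6"

lemma abs_pohozaev_density_le:
  fixes x :: R3
  defines "\<rho> \<equiv> 1 + x \<bullet> x"
  assumes lap2: "\<bar>laplacian (laplacian w) x\<bar> \<le> A / \<rho>"
    and hess: "\<And>j k. \<bar>pd j (pd k w) x\<bar> \<le> B"
    and v: "(v x)\<^sup>2 \<le> C / \<rho>" and Dv: "\<And>k. (Dv k x)\<^sup>2 \<le> C / \<rho>\<^sup>2"
  shows "\<bar>pohozaev_density w v Dv x\<bar> \<le> (A * C + 36 * B * C + 4 * B * C ^ 3) / \<rho>\<^sup>2"
proof -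
  have \<rho>: "1 \<le> \<rho>"
    by (simp add: \<rho>_def)
  have "\<bar>laplacian (laplacian w) x * (v x)\<^sup>2\<bar> \<le> (A / \<rho>) * (C / \<rho>)"
    unfolding abs_mult using lap2 v by (intro mult_mono) auto
  then have T1: "\<bar>laplacian (laplacian w) x * (v x)\<^sup>2\<bar> \<le> A * C / \<rho>\<^sup>2"
    by (simp add: power2_eq_square)
  have T2: "\<bar>\<Sum>j\<in>UNIV. \<Sum>k\<in>UNIV. Dv j x * Dv k x * pd j (pd k w) x\<bar> \<le> 9 * (B * (C / \<rho>\<^sup>2))"
    using hess Dv by (rule abs_quadratic_form_le)
  have "\<bar>laplacian w x\<bar> \<le> 3 * B"
    unfolding laplacian_def using sum_mono[of UNIV "\<lambda>j. \<bar>pd j (pd j w) x\<bar>" "\<lambda>_. B"] hess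
    by (intro order_trans[OF sum_abs]) simp
  then have T3: "\<bar>laplacian w x * v x ^ 6\<bar> \<le> 3 * B * (C ^ 3 / \<rho>\<^sup>2)"
    unfolding abs_mult using power6_le_cube_div_sq[OF \<rho> v] by (intro mult_mono) auto
  have "\<bar>pohozaev_density w v Dv x\<bar> \<le> A * C / \<rho>\<^sup>2 + 4 * (9 * (B * (C / \<rho>\<^sup>2))) + 4/3 * (3 * B * (C ^ 3 / \<rho>\<^sup>2))"
    unfolding pohozaev_density_def using T1 T2 T3 by (simp add: abs_le_iff)
  then show ?thesis
    by (simp add: add_divide_distrib algebra_simps)
qed

lemma pohozaev_density_wR_inside:
  assumes "admissible_phi \<phi>" "0 < R" "norm x < R"
  shows "pohozaev_density (wR \<phi> R) v Dv x = 8 * (\<Sum>j\<in>UNIV. (Dv j x)\<^sup>2) - 8 * v x ^ 6"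
  unfolding pohozaev_density_def pd_pd_wR_inside[OF assms] laplacian_wR_inside[OF assms]
    laplacian_laplacian_wR_inside[OF assms]
  by (simp add: if_distrib sum.If_cases power2_eq_square sum_distrib_left)

locale lane_emden_solution =
  fixes v :: "R3 \<Rightarrow> real" and Dv :: "3 \<Rightarrow> R3 \<Rightarrow> real" and Hv :: "3 \<Rightarrow> 3 \<Rightarrow> R3 \<Rightarrow> real"
  assumes has_pd_v: "has_pd j v x (Dv j x)"
    and has_pd_Dv: "has_pd j (Dv k) x (Hv j k x)"
    and continuous_v: "continuous_on UNIV v"
    and continuous_Dv: "continuous_on UNIV (Dv k)"
    and continuous_Hv: "continuous_on UNIV (Hv j k)"
    and Hv_sym: "Hv j k x = Hv k j x"
    and trace_Hv: "(\<Sum>j\<in>UNIV. Hv j j x) = - (v x ^ 5)"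
begin

definition pohozaev_flux_pd :: "(R3 \<Rightarrow> real) \<Rightarrow> 3 \<Rightarrow> R3 \<Rightarrow> real" where
  "pohozaev_flux_pd w j x =
     - pd j (pd j (laplacian w)) x * (v x)\<^sup>2
     + 2 * laplacian w x * ((Dv j x)\<^sup>2 + v x * Hv j j x)
     + 4 * (\<Sum>k\<in>UNIV. pd j (pd k w) x * Dv j x * Dv k x
                      + pd k w x * (Hv j j x * Dv k x + Dv j x * Hv j k x))
     - 2 * pd j (pd j w) x * (\<Sum>k\<in>UNIV. (Dv k x)\<^sup>2)
     - 4 * pd j w x * (\<Sum>k\<in>UNIV. Dv k x * Hv j k x)
     + 2/3 * pd j (pd j w) x * v x ^ 6
     + 4 * pd j w x * v x ^ 5 * Dv j x"

lemma has_pd_pohozaev_flux: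
  assumes "smooth w"
  shows "has_pd j (pohozaev_flux w v Dv j) x (pohozaev_flux_pd w j x)"
proof -
  have "has_pd j f x (pd j f x)" if "f \<in> {w, laplacian w, pd k w, pd k (laplacian w)}" for f k
    using that assms by (auto intro!: smooth_has_pd smooth_pd smooth_laplacian)
  then show ?thesis
    unfolding pohozaev_flux_def[abs_def] pohozaev_flux_pd_def
    by (auto intro!: has_pd_eq_intros has_pd_v has_pd_Dv)
      (simp_all add: algebra_simps sum_distrib_left sum.distrib power2_eq_square)
qed

lemma sum_pohozaev_flux_pd:
  "(\<Sum>j\<in>UNIV. pohozaev_flux_pd w j x) = pohozaev_density w v Dv x"
proof -
  have sym: "Hv 2 1 x = Hv 1 2 x" "Hv 3 1 x = Hv 1 3 x" "Hv 3 2 x = Hv 2 3 x"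
    using Hv_sym by auto
  have trace: "Hv 3 3 x = - (v x ^ 5) - Hv 1 1 x - Hv 2 2 x"
    using trace_Hv[of x] by (simp add: sum_3)
  show ?thesis
    unfolding pohozaev_flux_pd_def pohozaev_density_def laplacian_def
    by (simp add: sum_3 sym trace algebra_simps power2_eq_square power_def numeral_eq_Suc)
qed

lemma integral_pohozaev_density_eq_0:
  assumes w: "smooth w" and supp: "\<And>x. r < norm x \<Longrightarrow> w x = 0"
  shows "integrable lborel (pohozaev_density w v Dv)"
    and "integral\<^sup>L lborel (pohozaev_density w v Dv) = 0"
proof -
  have lap_supp: "laplacian w x = 0" if "r < norm x" for x
    using pdl_eq_0_outside[OF supp that, where js="[_, _]"] by (simp add: laplacian_def)
  have w_supp: "pd j w x = 0" "pd j (pd k w) x = 0" "laplacian w x = 0"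
    "pd j (laplacian w) x = 0" "pd j (pd j (laplacian w)) x = 0" if "r < norm x" for j k x
    using pdl_eq_0_outside[OF supp that, where js="[j]"] pdl_eq_0_outside[OF supp that, where js="[j, k]"]
      pdl_eq_0_outside[OF lap_supp that, where js="[j]"] pdl_eq_0_outside[OF lap_supp that, where js="[j, j]"]
      lap_supp[OF that] by simp_all
  have w_cont: "continuous_on UNIV (pd j w)" "continuous_on UNIV (pd j (pd k w))"
    "continuous_on UNIV (laplacian w)" "continuous_on UNIV (pd j (laplacian w))"
    "continuous_on UNIV (pd j (pd j (laplacian w)))" for j k
    using w by (auto intro!: smooth_imp_continuous smooth_pd smooth_laplacian)
  note cont = w_cont continuous_v continuous_Dv continuous_Hv
  have flux_pd_int: "integrable lborel (pohozaev_flux_pd w j)"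
    and flux_pd_zero: "integral\<^sup>L lborel (pohozaev_flux_pd w j) = 0" for j
  proof -
    have flux_pd: "continuous_on UNIV (pohozaev_flux_pd w j)"
      unfolding pohozaev_flux_pd_def[abs_def] by (intro continuous_intros cont)
    have flux: "continuous_on UNIV (pohozaev_flux w v Dv j)"
      unfolding pohozaev_flux_def[abs_def] by (intro continuous_intros cont)
    show "integrable lborel (pohozaev_flux_pd w j)"
      using flux_pd by (rule integrable_vanishing_outside_ball[where r=r])
        (simp add: pohozaev_flux_pd_def w_supp)
    show "integral\<^sup>L lborel (pohozaev_flux_pd w j) = 0"
      using has_pd_pohozaev_flux[OF w] flux flux_pd
      by (rule integral_pd_eq_0[where r=r]) (simp add: pohozaev_flux_def w_supp)
  qed
  have "pohozaev_density w v Dv = (\<lambda>x. \<Sum>j\<in>UNIV. pohozaev_flux_pd w j x)"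
    by (simp add: sum_pohozaev_flux_pd)
  then show "integrable lborel (pohozaev_density w v Dv)"
    and "integral\<^sup>L lborel (pohozaev_density w v Dv) = 0"
    using flux_pd_int flux_pd_zero by simp_all
qed

lemma pd_rotated:
  "pd j (\<lambda>y. cis \<theta> * complex_of_real (v y)) x = cis \<theta> * complex_of_real (Dv j x)"
proof -
  have "((\<lambda>t. v (x + t *\<^sub>R axis j 1)) has_real_derivative Dv j x) (at 0)"
    using has_pd_v unfolding has_pd_def .
  then have "((\<lambda>t. cis \<theta> * complex_of_real (v (x + t *\<^sub>R axis j 1))) has_vector_derivative
      cis \<theta> * complex_of_real (Dv j x)) (at 0)"
    by (intro has_vector_derivative_mult_right has_vector_derivative_of_real)
  then show ?thesis
    unfolding pd_def by (rule vector_derivative_at)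
qed

lemma norm_rotated: "cmod (cis \<theta> * complex_of_real a) = \<bar>a\<bar>"
  by (simp add: norm_mult)

lemma Re_cnj_rotated_mult: "Re (cnj (cis \<theta> * complex_of_real a) * (cis \<theta> * complex_of_real b)) = a * b"
proof -
  have "cnj (cis \<theta> * complex_of_real a) * (cis \<theta> * complex_of_real b)
      = (cnj (cis \<theta>) * cis \<theta>) * complex_of_real (a * b)"
    by (simp add: mult_ac)
  also have "cnj (cis \<theta>) * cis \<theta> = 1"
    by (simp add: cis_cnj cis_mult)
  finally show ?thesis by (simp only: mult_1 Re_complex_of_real)
qed

lemma Fc_finite_rotated_eq_pohozaev_density:
  "Fc \<phi> (ereal R) (\<lambda>x. cis \<theta> * complex_of_real (v x))
     = integral\<^sup>L lborel (pohozaev_density (wR \<phi> R) v Dv)"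
proof -
  have "- laplacian (laplacian w) x * (cmod (cis \<theta> * complex_of_real (v x)))\<^sup>2
      + 4 * (\<Sum>j\<in>UNIV. \<Sum>k\<in>UNIV. Re (cnj (pd j (\<lambda>y. cis \<theta> * complex_of_real (v y)) x)
            * pd k (\<lambda>y. cis \<theta> * complex_of_real (v y)) x) * pd j (pd k w) x)
      - 4/3 * laplacian w x * cmod (cis \<theta> * complex_of_real (v x)) ^ 6
      = pohozaev_density w v Dv x" for w x
    unfolding pd_rotated norm_rotated Re_cnj_rotated_mult pohozaev_density_def
    by (simp add: power_abs)
  then show ?thesis
    unfolding Fc_def Let_def by simp
qed

lemma integral_pohozaev_density_wR_eq_0:
  assumes "admissible_phi \<phi>" "0 < R"
  shows "integrable lborel (pohozaev_density (wR \<phi> R) v Dv)"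
    and "integral\<^sup>L lborel (pohozaev_density (wR \<phi> R) v Dv) = 0"
proof -
  have "smooth (wR \<phi> R)"
    using assms by (simp add: smooth_wR admissible_phi_def)
  from this wR_eq_0[OF assms] show "integrable lborel (pohozaev_density (wR \<phi> R) v Dv)"
    by (rule integral_pohozaev_density_eq_0(1))
  from \<open>smooth (wR \<phi> R)\<close> wR_eq_0[OF assms]
  show "integral\<^sup>L lborel (pohozaev_density (wR \<phi> R) v Dv) = 0"
    by (rule integral_pohozaev_density_eq_0(2))
qed

lemma Fc_finite_rotated_eq_0:
  assumes "admissible_phi \<phi>" "0 < R"
  shows "Fc \<phi> (ereal R) (\<lambda>x. cis \<theta> * complex_of_real (v x)) = 0"
  unfolding Fc_finite_rotated_eq_pohozaev_density by (rule integral_pohozaev_density_wR_eq_0(2)[OF assms])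

end

locale decaying_lane_emden_solution = lane_emden_solution +
  assumes decay: "\<exists>C. \<forall>x k. (v x)\<^sup>2 \<le> C / (1 + x \<bullet> x) \<and> (Dv k x)\<^sup>2 \<le> C / (1 + x \<bullet> x)\<^sup>2"
begin

lemma decay_bounds:
  obtains C where "0 \<le> C" "\<And>x. (v x)\<^sup>2 \<le> C / (1 + x \<bullet> x)" "\<And>x k. (Dv k x)\<^sup>2 \<le> C / (1 + x \<bullet> x)\<^sup>2"
    "\<And>x. v x ^ 6 \<le> C ^ 3 / (1 + x \<bullet> x)\<^sup>2"
proof -
  obtain C where C: "\<And>x. (v x)\<^sup>2 \<le> C / (1 + x \<bullet> x)" "\<And>x k. (Dv k x)\<^sup>2 \<le> C / (1 + x \<bullet> x)\<^sup>2"
    using decay by blast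
  have C0: "0 \<le> C"
    using order_trans[OF zero_le_power2 C(1)[of 0]] by simp
  have "v x ^ 6 \<le> C ^ 3 / (1 + x \<bullet> x)\<^sup>2" for x
    using C(1) by (intro power6_le_cube_div_sq) simp_all
  then show ?thesis
    using that C0 C by blast
qed

lemma integrable_sum_Dv_sq: "integrable lborel (\<lambda>x. \<Sum>j\<in>UNIV. (Dv j x)\<^sup>2)"
proof -
  obtain C where C: "0 \<le> C" "\<And>x k. (Dv k x)\<^sup>2 \<le> C / (1 + x \<bullet> x)\<^sup>2"
    using decay_bounds by metis
  show ?thesis
  proof (rule Bochner_Integration.integrable_bound[OF integrable_const_div_one_plus_inner_self_sq[of "3 * C"]])
    have "(\<Sum>j\<in>UNIV. (Dv j x)\<^sup>2) \<le> (\<Sum>j\<in>(UNIV::3 set). C / (1 + x \<bullet> x)\<^sup>2)" for x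
      using C(2) by (intro sum_mono)
    then show "AE x in lborel. norm (\<Sum>j\<in>UNIV. (Dv j x)\<^sup>2) \<le> norm (3 * C / (1 + x \<bullet> x)\<^sup>2)"
      using C(1) by (simp add: abs_of_nonneg sum_nonneg)
    have "continuous_on UNIV (\<lambda>x. \<Sum>j\<in>UNIV. (Dv j x)\<^sup>2)"
      by (intro continuous_intros continuous_Dv)
    then show "(\<lambda>x. \<Sum>j\<in>UNIV. (Dv j x)\<^sup>2) \<in> borel_measurable lborel"
      by (simp add: borel_measurable_continuous_onI)
  qed
qed

lemma integrable_v_pow_6: "integrable lborel (\<lambda>x. v x ^ 6)"
proof -
  obtain C where C: "0 \<le> C" "\<And>x. v x ^ 6 \<le> C ^ 3 / (1 + x \<bullet> x)\<^sup>2"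
    using decay_bounds by metis
  show ?thesis
  proof (rule Bochner_Integration.integrable_bound[OF integrable_const_div_one_plus_inner_self_sq[of "C ^ 3"]])
    show "AE x in lborel. norm (v x ^ 6) \<le> norm (C ^ 3 / (1 + x \<bullet> x)\<^sup>2)"
      using C by (auto simp: abs_of_nonneg zero_le_even_power)
    have "continuous_on UNIV (\<lambda>x. v x ^ 6)"
      by (intro continuous_intros continuous_v)
    then show "(\<lambda>x. v x ^ 6) \<in> borel_measurable lborel"
      by (simp add: borel_measurable_continuous_onI)
  qed
qed

lemma pohozaev_density_wR_bound:
  assumes "admissible_phi \<phi>"
  obtains K where "\<And>R x. 1 \<le> R \<Longrightarrow> \<bar>pohozaev_density (wR \<phi> R) v Dv x\<bar> \<le> K / (1 + x \<bullet> x)\<^sup>2"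
proof -
  obtain C where C: "\<And>x. (v x)\<^sup>2 \<le> C / (1 + x \<bullet> x)" "\<And>x k. (Dv k x)\<^sup>2 \<le> C / (1 + x \<bullet> x)\<^sup>2"
    using decay_bounds by metis
  obtain B2 where B2: "\<And>R x j k. 1 \<le> R \<Longrightarrow> \<bar>pd j (pd k (wR \<phi> R)) x\<bar> \<le> B2"
    using pd_pd_wR_bound[OF assms] by blast
  obtain B4 where B4: "\<And>R x. 1 \<le> R \<Longrightarrow> \<bar>laplacian (laplacian (wR \<phi> R)) x\<bar> \<le> B4 / (1 + x \<bullet> x)"
    using laplacian_laplacian_wR_bound[OF assms] by blast
  show ?thesis
    using abs_pohozaev_density_le[where v=v and Dv=Dv, OF B4 B2 C(1) C(2)] that by blast
qed

text \<open>The cutoff \<open>\<phi>\<close> is only a tool: the localized identities for \<open>wR \<phi> R\<close> converge to this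
  one as \<open>R \<rightarrow> \<infinity>\<close>.\<close>
lemma energy_identity:
  assumes \<phi>: "admissible_phi \<phi>"
  shows "(LINT x|lborel. (\<Sum>j\<in>UNIV. (Dv j x)\<^sup>2)) = (LINT x|lborel. v x ^ 6)"
proof -
  obtain K where K: "\<And>R x. 1 \<le> R \<Longrightarrow> \<bar>pohozaev_density (wR \<phi> R) v Dv x\<bar> \<le> K / (1 + x \<bullet> x)\<^sup>2"
    using pohozaev_density_wR_bound[OF \<phi>] by blast
  define density where "density n = pohozaev_density (wR \<phi> (Suc n)) v Dv" for n
  define limit where "limit x = 8 * (\<Sum>j\<in>UNIV. (Dv j x)\<^sup>2) - 8 * v x ^ 6" for x
  have "(\<lambda>n. integral\<^sup>L lborel (density n)) \<longlonglongrightarrow> integral\<^sup>L lborel limit"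
  proof (rule integral_dominated_convergence[where w="\<lambda>x::R3. K / (1 + x \<bullet> x)\<^sup>2"])
    show "limit \<in> borel_measurable lborel"
      unfolding limit_def[abs_def] using integrable_sum_Dv_sq integrable_v_pow_6 by auto
    show "density n \<in> borel_measurable lborel" for n
      unfolding density_def using integral_pohozaev_density_wR_eq_0(1)[OF \<phi>] by simp
    show "AE x in lborel. norm (density n x) \<le> K / (1 + x \<bullet> x)\<^sup>2" for n
      unfolding density_def using K by simp
    show "AE x in lborel. (\<lambda>n. density n x) \<longlonglongrightarrow> limit x"
    proof (rule AE_I2, rule tendsto_eventually, rule eventually_sequentiallyI)
      fix x :: R3 and n :: nat
      assume "nat \<lceil>norm x\<rceil> \<le> n"
      then have "norm x < real (Suc n)"
        by linarith
      then show "density n x = limit x"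
        unfolding density_def limit_def using pohozaev_density_wR_inside[OF \<phi>] by simp
    qed
  qed (rule integrable_const_div_one_plus_inner_self_sq)
  moreover have "integral\<^sup>L lborel (density n) = 0" for n
    unfolding density_def using integral_pohozaev_density_wR_eq_0(2)[OF \<phi>] by simp
  ultimately have "integral\<^sup>L lborel limit = 0"
    using LIMSEQ_unique by (simp add: LIMSEQ_const_iff)
  then show ?thesis
    unfolding limit_def[abs_def] using integrable_sum_Dv_sq integrable_v_pow_6 by simp
qed

lemma Fc_rotated_eq_0:
  assumes "admissible_phi \<phi>" "1 \<le> R"
  shows "Fc \<phi> R (\<lambda>x. cis \<theta> * complex_of_real (v x)) = 0"
proof (cases R)
  case (real r)
  then show ?thesis
    using Fc_finite_rotated_eq_0[OF assms(1), of r] assms(2) by simp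
next
  case PInf
  then show ?thesis
    using energy_identity[OF assms(1)] unfolding Fc_def by (simp add: pd_rotated norm_rotated power_abs)
next
  case MInf
  then show ?thesis using assms(2) by simp
qed

end

section \<open>The rescaled ground state\<close>

definition scaled_W_base :: "real \<Rightarrow> R3 \<Rightarrow> real" where
  "scaled_W_base lam x = 1 + lam\<^sup>2 / 3 * (x \<bullet> x)"

definition grad_scaled_W :: "real \<Rightarrow> 3 \<Rightarrow> R3 \<Rightarrow> real" where
  "grad_scaled_W lam k x = - sqrt lam * lam\<^sup>2 / 3 * x $ k / sqrt (scaled_W_base lam x) ^ 3"

definition hess_scaled_W :: "real \<Rightarrow> 3 \<Rightarrow> 3 \<Rightarrow> R3 \<Rightarrow> real" where
  "hess_scaled_W lam j k x = sqrt lam * lam\<^sup>2 / 3 *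
     (lam\<^sup>2 * x $ j * x $ k / sqrt (scaled_W_base lam x) ^ 5
      - (if j = k then 1 else 0) / sqrt (scaled_W_base lam x) ^ 3)"

lemma scaled_W_base_ge_1: "1 \<le> scaled_W_base lam x"
  by (simp add: scaled_W_base_def)

lemma scaled_W_eq: "sqrt lam * W (lam *\<^sub>R x) = sqrt lam / sqrt (scaled_W_base lam x)"
proof -
  have "1 + (norm (lam *\<^sub>R x))\<^sup>2 / 3 = scaled_W_base lam x"
    by (simp add: scaled_W_base_def power2_norm_eq_inner power_mult_distrib)
  moreover have "y powr (-1/2) = 1 / sqrt y" if "0 < y" for y :: real
    using that by (simp add: powr_minus_divide powr_half_sqrt flip: minus_divide_left)
  ultimately show ?thesis
    using scaled_W_base_ge_1[of lam x] by (simp add: W_def)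
qed

lemma has_pd_scaled_W_base: "has_pd j (scaled_W_base lam) x (2 * lam\<^sup>2 / 3 * x $ j)"
  unfolding scaled_W_base_def[abs_def]
  by (auto intro!: has_pd_eq_intros has_pd_inner_self)

lemma has_pd_sqrt_scaled_W_base:
  "has_pd j (\<lambda>y. sqrt (scaled_W_base lam y)) x (lam\<^sup>2 / 3 * x $ j / sqrt (scaled_W_base lam x))"
  using scaled_W_base_ge_1[of lam x] by (intro has_pd_sqrt[OF has_pd_scaled_W_base]) auto

lemma has_pd_scaled_W:
  "has_pd j (\<lambda>y. sqrt lam * W (lam *\<^sub>R y)) x (grad_scaled_W lam j x)"
proof -
  have s: "0 < sqrt (scaled_W_base lam x)"
    using scaled_W_base_ge_1[of lam x] by simp
  from has_pd_sqrt_scaled_W_base have "has_pd j (\<lambda>y. sqrt lam / sqrt (scaled_W_base lam y)) x (grad_scaled_W lam j x)"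
    by (rule has_pd_divide[OF has_pd_const]) (use s in \<open>auto simp: grad_scaled_W_def field_simps power3_eq_cube\<close>)
  then show ?thesis
    by (simp add: scaled_W_eq)
qed

lemma has_pd_grad_scaled_W:
  "has_pd j (grad_scaled_W lam k) x (hess_scaled_W lam j k x)"
proof -
  have s: "0 < sqrt (scaled_W_base lam x)"
    using scaled_W_base_ge_1[of lam x] by simp
  have "has_pd j (\<lambda>y. - sqrt lam * lam\<^sup>2 / 3 * y $ k) x (- sqrt lam * lam\<^sup>2 / 3 * (if j = k then 1 else 0))"
    by (rule has_pd_mult[OF has_pd_const has_pd_component]) simp
  moreover have "has_pd j (\<lambda>y. sqrt (scaled_W_base lam y) ^ 3) x
      (3 * (sqrt (scaled_W_base lam x))\<^sup>2 * (lam\<^sup>2 / 3 * x $ j / sqrt (scaled_W_base lam x)))"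
    by (rule has_pd_power[OF has_pd_sqrt_scaled_W_base]) simp
  ultimately show ?thesis
    unfolding grad_scaled_W_def[abs_def]
    by (rule has_pd_divide) (use s in \<open>auto simp: hess_scaled_W_def field_simps power_Suc[symmetric] simp del: real_sqrt_pow2\<close>)
qed

lemma continuous_on_scaled_W_base: "continuous_on UNIV (scaled_W_base lam)"
  unfolding scaled_W_base_def[abs_def] by (intro continuous_intros)

lemma scaled_W_base_neq_0: "scaled_W_base lam x \<noteq> 0"
  using scaled_W_base_ge_1[of lam x] by simp

lemma trace_hess_scaled_W:
  assumes "0 < lam"
  shows "(\<Sum>j\<in>UNIV. hess_scaled_W lam j j x) = - ((sqrt lam * W (lam *\<^sub>R x)) ^ 5)"
proof -
  define s where "s = sqrt (scaled_W_base lam x)"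
  have s: "0 < s" "s\<^sup>2 = 1 + lam\<^sup>2 / 3 * (x \<bullet> x)"
    unfolding s_def scaled_W_base_def by (simp_all add: add_pos_nonneg)
  have "(\<Sum>j\<in>UNIV. hess_scaled_W lam j j x) = sqrt lam * lam\<^sup>2 / 3 * (lam\<^sup>2 * (x \<bullet> x) / s ^ 5 - 3 / s ^ 3)"
    unfolding hess_scaled_W_def s_def[symmetric] using s(1) by (simp add: inner_vec_def sum_3 field_simps)
  also have "lam\<^sup>2 * (x \<bullet> x) = 3 * s\<^sup>2 - 3"
    using s(2) by simp
  also have "(3 * s\<^sup>2 - 3) / s ^ 5 - 3 / s ^ 3 = - 3 / s ^ 5"
    using s(1) by (simp add: divide_simps eval_nat_numeral)
  also have "sqrt lam * lam\<^sup>2 / 3 * (- 3 / s ^ 5) = - (sqrt lam * lam\<^sup>2 / s ^ 5)"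
    by simp
  also have "sqrt lam * lam\<^sup>2 = sqrt lam ^ 5"
    using assms by (simp add: power_mult[of _ 2 2, symmetric, simplified] numeral_eq_Suc)
  finally show ?thesis
    by (simp add: scaled_W_eq s_def power_divide)
qed

lemma scaled_W_base_lower_bound: "min 1 (lam\<^sup>2 / 3) * (1 + x \<bullet> x) \<le> scaled_W_base lam x"
proof -
  have "min 1 (lam\<^sup>2 / 3) * (x \<bullet> x) \<le> lam\<^sup>2 / 3 * (x \<bullet> x)"
    by (intro mult_right_mono) auto
  then show ?thesis
    by (simp add: scaled_W_base_def distrib_left)
qed

lemma scaled_W_sq: "0 \<le> lam \<Longrightarrow> (sqrt lam * W (lam *\<^sub>R x))\<^sup>2 = lam / scaled_W_base lam x"
  using scaled_W_base_ge_1[of lam x] by (simp add: scaled_W_eq power_divide)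

lemma grad_scaled_W_sq:
  assumes "0 \<le> lam"
  shows "(grad_scaled_W lam k x)\<^sup>2 = lam * (lam\<^sup>2 / 3)\<^sup>2 * (x $ k)\<^sup>2 / scaled_W_base lam x ^ 3"
proof -
  have "sqrt (scaled_W_base lam x) ^ 6 = (sqrt (scaled_W_base lam x) ^ 2) ^ 3"
    by (simp flip: power_mult)
  then have "sqrt (scaled_W_base lam x) ^ 6 = scaled_W_base lam x ^ 3"
    using scaled_W_base_ge_1[of lam x] by simp
  then show ?thesis
    using assms by (simp add: grad_scaled_W_def power_divide power_mult_distrib flip: power_mult)
qed

lemma scaled_W_decay:
  assumes "0 < lam"
  obtains C where "\<And>x. (sqrt lam * W (lam *\<^sub>R x))\<^sup>2 \<le> C / (1 + x \<bullet> x)"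
    and "\<And>x k. (grad_scaled_W lam k x)\<^sup>2 \<le> C / (1 + x \<bullet> x)\<^sup>2"
proof
  define c where "c = lam\<^sup>2 / 3"
  define m where "m = min 1 c"
  have c: "0 < c" and m: "0 < m"
    using assms by (auto simp: c_def m_def)
  fix x :: R3 and k :: 3
  define \<rho> where "\<rho> = 1 + x \<bullet> x"
  have \<rho>: "1 \<le> \<rho>" and q: "m * \<rho> \<le> scaled_W_base lam x"
    using scaled_W_base_lower_bound[of lam x] by (auto simp: \<rho>_def m_def c_def)
  have "(sqrt lam * W (lam *\<^sub>R x))\<^sup>2 \<le> lam / (m * \<rho>)"
    unfolding scaled_W_sq[OF less_imp_le[OF assms]] using assms m \<rho> q by (intro frac_le) auto
  also have "\<dots> \<le> (lam / m + lam * c\<^sup>2 / m ^ 3) / \<rho>"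
    using assms m c \<rho> by (simp add: field_simps)
  finally show "(sqrt lam * W (lam *\<^sub>R x))\<^sup>2 \<le> (lam / m + lam * c\<^sup>2 / m ^ 3) / (1 + x \<bullet> x)"
    by (simp add: \<rho>_def)
  have "(x $ k)\<^sup>2 \<le> (norm x)\<^sup>2"
    using power_mono[OF component_le_norm_cart[of x k] abs_ge_zero, of 2] by simp
  then have "(x $ k)\<^sup>2 \<le> \<rho>"
    by (simp add: \<rho>_def power2_norm_eq_inner)
  then have "(grad_scaled_W lam k x)\<^sup>2 \<le> lam * c\<^sup>2 * \<rho> / (m * \<rho>) ^ 3"
    unfolding grad_scaled_W_sq[OF less_imp_le[OF assms]] c_def[symmetric]
    using assms m \<rho> q by (intro frac_le mult_left_mono power_mono) auto
  also have "\<dots> \<le> (lam / m + lam * c\<^sup>2 / m ^ 3) / \<rho>\<^sup>2"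
    using assms m c \<rho> by (simp add: field_simps power2_eq_square power3_eq_cube)
  finally show "(grad_scaled_W lam k x)\<^sup>2 \<le> (lam / m + lam * c\<^sup>2 / m ^ 3) / (1 + x \<bullet> x)\<^sup>2"
    by (simp add: \<rho>_def)
qed

lemma decaying_lane_emden_solution_scaled_W:
  assumes "0 < lam"
  shows "decaying_lane_emden_solution (\<lambda>x. sqrt lam * W (lam *\<^sub>R x)) (grad_scaled_W lam) (hess_scaled_W lam)"
proof
  have "continuous_on UNIV (\<lambda>x. sqrt lam / sqrt (scaled_W_base lam x))"
    by (intro continuous_intros continuous_on_scaled_W_base) (simp add: scaled_W_base_neq_0)
  then show "continuous_on UNIV (\<lambda>x. sqrt lam * W (lam *\<^sub>R x))"
    by (simp add: scaled_W_eq)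
  show "continuous_on UNIV (grad_scaled_W lam k)" for k
    unfolding grad_scaled_W_def[abs_def]
    by (intro continuous_intros continuous_on_scaled_W_base) (simp add: scaled_W_base_neq_0)
  show "continuous_on UNIV (hess_scaled_W lam j k)" for j k
    unfolding hess_scaled_W_def[abs_def]
    by (intro continuous_intros continuous_on_scaled_W_base) (simp_all add: scaled_W_base_neq_0)
  show "hess_scaled_W lam j k x = hess_scaled_W lam k j x" for j k x
    by (auto simp: hess_scaled_W_def mult_ac)
  show "(\<Sum>j\<in>UNIV. hess_scaled_W lam j j x) = - ((sqrt lam * W (lam *\<^sub>R x)) ^ 5)" for x
    using assms by (rule trace_hess_scaled_W)
  obtain C where "\<And>x. (sqrt lam * W (lam *\<^sub>R x))\<^sup>2 \<le> C / (1 + x \<bullet> x)"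
    and "\<And>x k. (grad_scaled_W lam k x)\<^sup>2 \<le> C / (1 + x \<bullet> x)\<^sup>2"
    using scaled_W_decay[OF assms] by blast
  then show "\<exists>C. \<forall>x k. (sqrt lam * W (lam *\<^sub>R x))\<^sup>2 \<le> C / (1 + x \<bullet> x)
      \<and> (grad_scaled_W lam k x)\<^sup>2 \<le> C / (1 + x \<bullet> x)\<^sup>2"
    by blast
qed (rule has_pd_scaled_W has_pd_grad_scaled_W)+

theorem lemma2p5:
  fixes \<phi> :: "R3 \<Rightarrow> real" and R :: ereal and \<theta> lam :: real
  assumes "admissible_phi \<phi>" and "1 \<le> R" and "lam > 0"
  shows "Fc \<phi> R (\<lambda>x. cis \<theta> * complex_of_real (sqrt lam * W (lam *\<^sub>R x))) = 0"
proof -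
  interpret decaying_lane_emden_solution "\<lambda>x. sqrt lam * W (lam *\<^sub>R x)" "grad_scaled_W lam" "hess_scaled_W lam"
    using assms(3) by (rule decaying_lane_emden_solution_scaled_W)
  show ?thesis
    using Fc_rotated_eq_0[OF assms(1,2)] by simp
qed

end
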